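(* Let $n \geq 1$, $r \geq 1$, $k \geq 0$ be integers, and suppose that either (1) $n \geq 3r^2 + 100$, $r \geq 2$, and $k \leq 4r$; or (2) $k \leq \frac{n}{\ln(n+1) + 1} - r$. Then \[E_r(n,k) \geq 0.6 \binom{k+r-1}{r-1}(k+r)^n.\]
   Context: The $r$th order Eulerian number $E_r(n,k)$ is the number of pairs $(w, S)$ with $w$ a permutation of $\{1, \ldots, n\}$ and $S \subset \{1, \ldots, n-1\}$ of size $r-1$ such that exactly $k$ indices $i \in \{1,\ldots,n-1\} \setminus S$ satisfy $w(i) > w(i+1)$. *)

theory Defs
  imports "HOL-Analysis.Analysis" "HOL-Combinatorics.Combinatorics"
begin

definition descents_outside :: "nat \<Rightarrow> (nat \<Rightarrow> nat) \<Rightarrow> nat set \<Rightarrow> nat set" where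
  "descents_outside n w S = {i \<in> {1..n-1} - S. w i > w (i+1)}"

definition eulerian_r :: "nat \<Rightarrow> nat \<Rightarrow> nat \<Rightarrow> nat" where
  "eulerian_r r n k = card {(w, S). w permutes {1..n} \<and> S \<subseteq> {1..n-1} \<and> card S = r - 1
        \<and> card (descents_outside n w S) = k}"

end

theory Submission
  imports Defs
begin

text \<open>
  Choosing \<open>r - 1\<close> of the descents of a permutation with \<open>m = k + r - 1\<close> descents
  leaves exactly \<open>k\<close> descents outside the chosen set, so \<open>E_r(n,k)\<close> is at least
  \<open>C(m, r - 1)\<close> times the number \<open>A(n,m)\<close> of permutations with \<open>m\<close> descents.

  To bound \<open>A(n,m)\<close>, read a function \<open>f : {1..n} \<rightarrow> {0..m}\<close> along the permutation \<open>w\<close>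
  that sorts \<open>{1..n}\<close> by \<open>(f x, x)\<close>: it must rise at every descent of \<open>w\<close>. If it starts
  at 0, ends at \<open>m\<close> and rises only at descents, then \<open>f\<close> is determined by \<open>w\<close>, which has
  \<open>m\<close> descents. Otherwise there is a first slack position \<open>c\<close>; lowering \<open>f\<close> by one after
  \<open>c\<close> in the sorted order gives a function into \<open>{0..m-1}\<close> with the same sorting
  permutation, from which \<open>f\<close> is recovered. Hence \<open>(m+1)^n \<le> A(n,m) + (n+1) m^n\<close>.

  Finally \<open>(n+1) (m/(m+1))^n \<le> (n+1) exp(-n/(m+1)) \<le> 1/e < 0.4\<close> as soon as
  \<open>(m+1) (ln(n+1) + 1) \<le> n\<close>, and each of the two hypotheses implies this inequality.
\<close>

lemma strict_mono_on_atLeastAtMost_SucI: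
  fixes g :: "nat \<Rightarrow> 'a::order"
  assumes "\<And>i. a \<le> i \<Longrightarrow> i < b \<Longrightarrow> g i < g (Suc i)"
  shows "strict_mono_on {a..b} g"
proof (rule strict_mono_onI)
  fix i j assume "i \<in> {a..b}" "j \<in> {a..b}" "i < j"
  have "a \<le> i \<longrightarrow> j \<le> b \<longrightarrow> g i < g j"
    using \<open>i < j\<close>
    by (induction rule: less_Suc_induct) (use assms in \<open>auto dest: order.strict_trans\<close>)
  then show "g i < g j" using \<open>i \<in> {a..b}\<close> \<open>j \<in> {a..b}\<close> by simp
qed

lemma permutes_strict_mono_on_unique:
  fixes g :: "nat \<Rightarrow> 'a::linorder"
  assumes w: "w permutes {1..n}" "strict_mono_on {1..n} (g \<circ> w)"
    and w': "w' permutes {1..n}" "strict_mono_on {1..n} (g \<circ> w')"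
  shows "w = w'"
proof -
  have sorted_list: "sorted_wrt (<) (map (g \<circ> v) [1..<Suc n])
      \<and> set (map (g \<circ> v) [1..<Suc n]) = g ` {1..n}"
    if "v permutes {1..n}" "strict_mono_on {1..n} (g \<circ> v)" for v
  proof
    show "sorted_wrt (<) (map (g \<circ> v) [1..<Suc n])"
      unfolding sorted_wrt_map
      by (rule sorted_wrt_mono_rel[OF _ sorted_wrt_upt])
        (use that(2) in \<open>auto simp: strict_mono_on_def\<close>)
    show "set (map (g \<circ> v) [1..<Suc n]) = g ` {1..n}"
      unfolding set_map set_upt atLeastLessThanSuc_atLeastAtMost image_comp[symmetric]
        permutes_image[OF that(1)] ..
  qed
  have same_map: "map (g \<circ> w) [1..<Suc n] = map (g \<circ> w') [1..<Suc n]"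
    using sorted_list[OF w] sorted_list[OF w'] unfolding strict_sorted_iff
    by (metis sorted_distinct_set_unique)
  have gw: "g (w i) = g (w' i)" if "i \<in> {1..n}" for i
  proof -
    have "i \<in> set [1..<Suc n]" using that by auto
    then show ?thesis using same_map by (simp only: map_eq_conv o_apply)
  qed
  have "inj_on g (w ` {1..n})"
    using strict_mono_on_imp_inj_on[OF w(2)] by (rule inj_on_imageI)
  then have "inj_on g {1..n}" using permutes_image[OF w(1)] by simp
  then have "w i = w' i" if "i \<in> {1..n}" for i
    using gw[OF that] permutes_in_image[OF w(1)] permutes_in_image[OF w'(1)] that
    by (auto dest: inj_onD)
  then show "w = w'"
    using permutes_not_in[OF w(1)] permutes_not_in[OF w'(1)] by (metis ext)
qed

definition lex_key :: "nat \<Rightarrow> (nat \<Rightarrow> nat) \<Rightarrow> nat \<Rightarrow> nat" where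
  "lex_key n f x = Suc n * f x + x"

lemma lex_key_less_iff:
  assumes "x \<le> n" "y \<le> n"
  shows "lex_key n f x < lex_key n f y \<longleftrightarrow> f x < f y \<or> f x = f y \<and> x < y"
proof -
  have less: "Suc n * a + x' < Suc n * b + y'" if "a < b" "x' \<le> n" for a b x' y' :: nat
  proof -
    have "Suc n * a + x' < Suc n * (a + 1)" using that(2) by simp
    also have "\<dots> \<le> Suc n * b" using that(1) by (intro mult_le_mono2) simp
    finally show ?thesis by simp
  qed
  show ?thesis
    using less[of "f x" "f y" x y] less[of "f y" "f x" y x] assms unfolding lex_key_def
    by (cases "f x" "f y" rule: linorder_cases) auto
qed

lemma inj_on_lex_key: "inj_on (lex_key n f) {..n}"
  by (rule inj_onI) (metis atMost_iff lex_key_less_iff less_irrefl linorder_neq_iff)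

definition sorting_perm :: "nat \<Rightarrow> (nat \<Rightarrow> nat) \<Rightarrow> nat \<Rightarrow> nat" where
  "sorting_perm n f i =
     (if i \<in> {1..n} then sort_key (lex_key n f) [1..<Suc n] ! (i - 1) else i)"

lemma sorting_perm_permutes: "sorting_perm n f permutes {1..n}"
proof -
  let ?xs = "sort_key (lex_key n f) [1..<Suc n]"
  have "bij_betw (\<lambda>i. i - 1) {1..n} {..<length ?xs}"
    by (rule bij_betw_byWitness[where f' = Suc]) auto
  moreover have "bij_betw ((!) ?xs) {..<length ?xs} {1..n}"
    by (rule bij_betw_nth) auto
  ultimately have "bij_betw (\<lambda>i. ?xs ! (i - 1)) {1..n} {1..n}"
    using bij_betw_trans by (auto simp: o_def)
  then have "bij_betw (sorting_perm n f) {1..n} {1..n}"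
    by (rule bij_betw_cong[THEN iffD1, rotated]) (simp add: sorting_perm_def)
  then show ?thesis
    by (rule bij_imp_permutes) (auto simp: sorting_perm_def)
qed

lemma sorting_perm_in: "i \<in> {1..n} \<Longrightarrow> sorting_perm n f i \<in> {1..n}"
  using sorting_perm_permutes by (rule permutes_in_image[THEN iffD2])

lemma sorting_perm_cases:
  assumes "x \<in> {1..n}"
  obtains i where "i \<in> {1..n}" "x = sorting_perm n f i"
proof -
  have "x \<in> sorting_perm n f ` {1..n}"
    using assms permutes_image[OF sorting_perm_permutes] by simp
  then show thesis using that by blast
qed

lemma sorting_perm_strict_mono_on: "strict_mono_on {1..n} (lex_key n f \<circ> sorting_perm n f)"
proof (rule strict_mono_onI)
  let ?xs = "sort_key (lex_key n f) [1..<Suc n]"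
  have "inj_on (lex_key n f) (set ?xs)"
    by (rule inj_on_subset[OF inj_on_lex_key]) auto
  then have "sorted_wrt (<) (map (lex_key n f) ?xs)"
    by (simp add: strict_sorted_iff distinct_map)
  then have "lex_key n f (?xs ! i) < lex_key n f (?xs ! j)" if "i < j" "j < n" for i j
    using that by (simp add: sorted_wrt_iff_nth_less)
  then show "(lex_key n f \<circ> sorting_perm n f) i < (lex_key n f \<circ> sorting_perm n f) j"
    if "i \<in> {1..n}" "j \<in> {1..n}" "i < j" for i j
    using that by (simp add: sorting_perm_def)
qed

lemma sorting_perm_less:
  fixes f :: "nat \<Rightarrow> nat"
  assumes "i \<in> {1..n}" "j \<in> {1..n}" "i < j"
  defines "w \<equiv> sorting_perm n f"
  shows "f (w i) < f (w j) \<or> f (w i) = f (w j) \<and> w i < w j"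
proof -
  have "lex_key n f (w i) < lex_key n f (w j)"
    using strict_mono_onD[OF sorting_perm_strict_mono_on assms(1-3)] unfolding w_def by simp
  moreover have "w i \<le> n" "w j \<le> n"
    using sorting_perm_in[OF assms(1)] sorting_perm_in[OF assms(2)] unfolding w_def by auto
  ultimately show ?thesis by (simp add: lex_key_less_iff)
qed

lemma sorting_perm_mono:
  "i \<in> {1..n} \<Longrightarrow> j \<in> {1..n} \<Longrightarrow> i \<le> j
    \<Longrightarrow> f (sorting_perm n f i) \<le> f (sorting_perm n f j)"
  using sorting_perm_less[of i n j f] by (cases "i = j") auto

lemma sorting_perm_step:
  assumes "1 \<le> i" "i < n"
  shows "f (sorting_perm n f i) + of_bool (sorting_perm n f (Suc i) < sorting_perm n f i)
    \<le> f (sorting_perm n f (Suc i))"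
  using sorting_perm_less[of i n "Suc i" f] assms by auto

definition eulerian :: "nat \<Rightarrow> nat \<Rightarrow> nat" where
  "eulerian n m = card {w. w permutes {1..n} \<and> card (descents_outside n w {}) = m}"

lemma descents_outside_empty: "descents_outside n w {} = {j \<in> {1..<n}. w (Suc j) < w j}"
  by (auto simp: descents_outside_def)

definition defect :: "nat \<Rightarrow> nat \<Rightarrow> (nat \<Rightarrow> nat) \<Rightarrow> nat \<Rightarrow> bool" where
  "defect n m f c \<longleftrightarrow>
     c = 0 \<and> 0 < f (sorting_perm n f 1) \<or>
     c = n \<and> f (sorting_perm n f n) < m \<or>
     0 < c \<and> c < n \<and>
       f (sorting_perm n f c) + of_bool (sorting_perm n f (Suc c) < sorting_perm n f c)
       < f (sorting_perm n f (Suc c))"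

lemma no_defect_value:
  assumes "\<forall>c. \<not> defect n m f c" "1 \<le> i" "i \<le> n"
  shows "f (sorting_perm n f i)
    = (\<Sum>j=1..<i. of_bool (sorting_perm n f (Suc j) < sorting_perm n f j))"
  using assms(2,3)
proof (induction i rule: nat_induct_at_least)
  case base
  then show ?case using assms(1) by (auto simp: defect_def)
next
  case (Suc i)
  then have "\<not> defect n m f i" using assms(1) by simp
  then show ?case using Suc sorting_perm_step[of i n f] by (simp add: defect_def)
qed

lemma no_defect_card_descents:
  assumes "\<forall>c. \<not> defect n m f c" "1 \<le> n" "f \<in> {1..n} \<rightarrow>\<^sub>E {..m}"
  shows "card (descents_outside n (sorting_perm n f) {}) = m"
proof -
  have "m \<le> f (sorting_perm n f n)" using assms(1,2) by (auto simp: defect_def)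
  moreover have "f (sorting_perm n f n) \<le> m" using assms(2,3) sorting_perm_in[of n n f] by auto
  ultimately show ?thesis
    using no_defect_value[OF assms(1,2) order.refl] by (simp add: descents_outside_empty Int_def)
qed

lemma no_defect_inj:
  assumes "\<forall>c. \<not> defect n m f c" "\<forall>c. \<not> defect n m g c"
    and "f \<in> extensional {1..n}" "g \<in> extensional {1..n}"
    and same_perm: "sorting_perm n f = sorting_perm n g"
  shows "f = g"
proof (rule extensionalityI[OF assms(3,4)])
  fix x assume "x \<in> {1..n}"
  then obtain i where "i \<in> {1..n}" "x = sorting_perm n f i" by (rule sorting_perm_cases)
  then show "f x = g x"
    using no_defect_value[OF assms(1)] no_defect_value[OF assms(2)] same_perm by simp
qed

lemma card_no_defect_le_eulerian:
  assumes "1 \<le> n"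
  shows "card {f \<in> {1..n} \<rightarrow>\<^sub>E {..m}. \<forall>c. \<not> defect n m f c} \<le> eulerian n m"
  unfolding eulerian_def
proof (rule card_inj_on_le[of "sorting_perm n"])
  show "inj_on (sorting_perm n) {f \<in> {1..n} \<rightarrow>\<^sub>E {..m}. \<forall>c. \<not> defect n m f c}"
    by (rule inj_onI) (auto intro: no_defect_inj simp: PiE_iff)
  show "sorting_perm n ` {f \<in> {1..n} \<rightarrow>\<^sub>E {..m}. \<forall>c. \<not> defect n m f c}
    \<subseteq> {w. w permutes {1..n} \<and> card (descents_outside n w {}) = m}"
    using no_defect_card_descents[OF _ assms] sorting_perm_permutes by blast
  show "finite {w. w permutes {1..n} \<and> card (descents_outside n w {}) = m}"
    using finite_permutations[of "{1..n}"] by (auto intro: finite_subset)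
qed

lemma defect_le: "defect n m f c \<Longrightarrow> c \<le> n"
  by (auto simp: defect_def)

definition lower_after :: "nat \<Rightarrow> (nat \<Rightarrow> nat) \<Rightarrow> nat \<Rightarrow> nat \<Rightarrow> nat" where
  "lower_after n f c = restrict (\<lambda>x. f x - of_bool (x \<in> sorting_perm n f ` {Suc c..n})) {1..n}"

lemma lower_after_sorting_perm:
  assumes "i \<in> {1..n}"
  shows "lower_after n f c (sorting_perm n f i) = f (sorting_perm n f i) - of_bool (c < i)"
proof -
  have "sorting_perm n f i \<in> sorting_perm n f ` {Suc c..n} \<longleftrightarrow> i \<in> {Suc c..n}"
    by (rule inj_image_mem_iff[OF permutes_inj[OF sorting_perm_permutes]])
  then show ?thesis using assms sorting_perm_in[OF assms] by (auto simp: lower_after_def)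
qed

lemma defect_pos_after:
  assumes "defect n m f c" "c < i" "i \<in> {1..n}"
  shows "0 < f (sorting_perm n f i)"
proof -
  have "0 < f (sorting_perm n f (Suc c))" using assms by (auto simp: defect_def)
  then show ?thesis using sorting_perm_mono[of "Suc c" n i f] assms by auto
qed

lemma defect_less_before:
  assumes "defect n m f c" "i \<le> c" "i \<in> {1..n}" "f \<in> {1..n} \<rightarrow>\<^sub>E {..m}"
  shows "f (sorting_perm n f i) < m"
proof -
  have "c \<in> {1..n}" using assms(1-3) defect_le by auto
  have "f (sorting_perm n f c) < m"
  proof (cases "c = n")
    case False
    then have "f (sorting_perm n f c) < f (sorting_perm n f (Suc c))"
      using assms(1) \<open>c \<in> {1..n}\<close> by (auto simp: defect_def)
    moreover have "f (sorting_perm n f (Suc c)) \<le> m"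
      using assms(4) sorting_perm_in[of "Suc c" n f] \<open>c \<in> {1..n}\<close> False by auto
    ultimately show ?thesis by simp
  qed (use assms(1) \<open>c \<in> {1..n}\<close> in \<open>auto simp: defect_def\<close>)
  then show ?thesis using sorting_perm_mono[of i n c f] assms(2,3) \<open>c \<in> {1..n}\<close> by auto
qed

lemma lower_after_in_PiE:
  assumes "defect n m f c" "f \<in> {1..n} \<rightarrow>\<^sub>E {..m}"
  shows "lower_after n f c \<in> {1..n} \<rightarrow>\<^sub>E {..<m}"
proof -
  have "lower_after n f c x < m" if x: "x \<in> {1..n}" for x
  proof -
    obtain i where i: "i \<in> {1..n}" "x = sorting_perm n f i"
      using x by (rule sorting_perm_cases)
    show ?thesis
    proof (cases "c < i")
      case True
      have "f x \<le> m" using PiE_mem[OF assms(2) x] by simp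
      then show ?thesis
        using lower_after_sorting_perm[OF i(1), of f c] defect_pos_after[OF assms(1) True i(1)]
          i(2) True
        by simp
    next
      case False
      then show ?thesis
        using lower_after_sorting_perm[OF i(1), of f c]
          defect_less_before[OF assms(1) _ i(1) assms(2)] i(2)
        by simp
    qed
  qed
  moreover have "lower_after n f c \<in> extensional {1..n}" by (simp add: lower_after_def)
  ultimately show ?thesis by (simp add: PiE_iff)
qed

lemma lex_key_lower_after_step:
  assumes "defect n m f c" "1 \<le> i" "i < n"
  defines "w \<equiv> sorting_perm n f" and "h \<equiv> lower_after n f c"
  shows "lex_key n h (w i) < lex_key n h (w (Suc i))"
proof -
  have i: "i \<in> {1..n}" "Suc i \<in> {1..n}" using assms(2,3) by auto
  have h: "h (w i) = f (w i) - of_bool (c < i)"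
    "h (w (Suc i)) = f (w (Suc i)) - of_bool (c < Suc i)"
    unfolding w_def h_def using lower_after_sorting_perm i by blast+
  have less: "f (w i) < f (w (Suc i)) \<or> f (w i) = f (w (Suc i)) \<and> w i < w (Suc i)"
    unfolding w_def using sorting_perm_less[OF i] by simp
  consider "c < i" | "c = i" | "Suc i \<le> c" by linarith
  then have "h (w i) < h (w (Suc i)) \<or> h (w i) = h (w (Suc i)) \<and> w i < w (Suc i)"
  proof cases
    case 1
    then have "0 < f (w i)" unfolding w_def using defect_pos_after[OF assms(1) _ i(1)] by blast
    then show ?thesis using less 1 unfolding h by auto
  next
    case 2
    \<comment> \<open>only position \<open>c + 1\<close> is lowered, and the slack of the defect absorbs it\<close>
    then have slack: "f (w i) + of_bool (w (Suc i) < w i) < f (w (Suc i))"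
      using assms(1-3) unfolding defect_def w_def by auto
    have "w i \<noteq> w (Suc i)"
    proof
      assume "w i = w (Suc i)"
      then have "i = Suc i"
        unfolding w_def by (rule injD[OF permutes_inj[OF sorting_perm_permutes]])
      then show False by simp
    qed
    then show ?thesis using slack 2 unfolding h by (cases "w (Suc i) < w i") auto
  next
    case 3
    then show ?thesis using less unfolding h by auto
  qed
  then show ?thesis
    using sorting_perm_in[OF i(1)] sorting_perm_in[OF i(2)] unfolding w_def
    by (simp add: lex_key_less_iff)
qed

lemma sorting_perm_lower_after:
  assumes "defect n m f c"
  shows "sorting_perm n (lower_after n f c) = sorting_perm n f"
proof -
  have "strict_mono_on {1..n} (lex_key n (lower_after n f c) \<circ> sorting_perm n f)"
    using lex_key_lower_after_step[OF assms] by (intro strict_mono_on_atLeastAtMost_SucI) simp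
  from permutes_strict_mono_on_unique[OF sorting_perm_permutes sorting_perm_strict_mono_on
      sorting_perm_permutes this]
  show ?thesis .
qed

lemma lower_after_inj:
  assumes "defect n m f c" "defect n m g c" "f \<in> extensional {1..n}" "g \<in> extensional {1..n}"
    and lower_eq: "lower_after n f c = lower_after n g c"
  shows "f = g"
proof (rule extensionalityI[OF assms(3,4)])
  have same_perm: "sorting_perm n f = sorting_perm n g"
    using sorting_perm_lower_after[OF assms(1)] sorting_perm_lower_after[OF assms(2)] lower_eq
    by simp
  fix x assume "x \<in> {1..n}"
  then obtain i where i: "i \<in> {1..n}" "x = sorting_perm n f i" by (rule sorting_perm_cases)
  have "f x - of_bool (c < i) = g x - of_bool (c < i)"
    using lower_after_sorting_perm[OF i(1), of f c] lower_after_sorting_perm[OF i(1), of g c]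
      lower_eq same_perm i(2) by simp
  moreover have "0 < f x \<and> 0 < g x" if "c < i"
    using defect_pos_after[OF assms(1) that i(1)] defect_pos_after[OF assms(2) that i(1)]
      same_perm i(2) by simp
  ultimately show "f x = g x" by (cases "c < i") auto
qed

lemma card_defect_le:
  "card {f \<in> {1..n} \<rightarrow>\<^sub>E {..m}. \<exists>c. defect n m f c} \<le> Suc n * m ^ n"
proof -
  let ?B = "{f \<in> {1..n} \<rightarrow>\<^sub>E {..m}. \<exists>c. defect n m f c}"
  define first where "first f = (LEAST c. defect n m f c)" for f
  have first: "defect n m f (first f)" if "f \<in> ?B" for f
    using that unfolding first_def by (auto intro: LeastI)
  let ?code = "\<lambda>f. (first f, lower_after n f (first f))"
  have "card ?B \<le> card ({..n} \<times> ({1..n} \<rightarrow>\<^sub>E {..<m}))"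
  proof (rule card_inj_on_le)
    show "inj_on ?code ?B"
    proof (rule inj_onI)
      fix f g assume f: "f \<in> ?B" and g: "g \<in> ?B" and code_eq: "?code f = ?code g"
      then have same_first: "first g = first f" by simp
      show "f = g"
      proof (rule lower_after_inj)
        show "defect n m f (first f)" using first[OF f] .
        show "defect n m g (first f)" using first[OF g] same_first by simp
        show "f \<in> extensional {1..n}" "g \<in> extensional {1..n}"
          using f g by (auto simp: PiE_iff)
        show "lower_after n f (first f) = lower_after n g (first f)"
          using code_eq same_first by simp
      qed
    qed
    show "?code ` ?B \<subseteq> {..n} \<times> ({1..n} \<rightarrow>\<^sub>E {..<m})"
    proof (rule image_subsetI)
      fix f assume f: "f \<in> ?B"
      show "?code f \<in> {..n} \<times> ({1..n} \<rightarrow>\<^sub>E {..<m})"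
        using defect_le[OF first[OF f]] lower_after_in_PiE[OF first[OF f]] f by simp
    qed
  qed (simp add: finite_PiE)
  then show ?thesis by (simp add: card_cartesian_product card_PiE)
qed

lemma Suc_pow_le_eulerian_add:
  assumes "1 \<le> n"
  shows "(m + 1) ^ n \<le> eulerian n m + Suc n * m ^ n"
proof -
  let ?F = "{1..n} \<rightarrow>\<^sub>E {..m}"
  let ?G = "{f. \<forall>c. \<not> defect n m f c}"
  have "card ?F = card (?F \<inter> ?G) + card (?F - ?G)"
    by (rule card_Int_Diff) (simp add: finite_PiE)
  also have "?F \<inter> ?G = {f \<in> ?F. \<forall>c. \<not> defect n m f c}" by blast
  also have "?F - ?G = {f \<in> ?F. \<exists>c. defect n m f c}" by blast
  also have "card {f \<in> ?F. \<forall>c. \<not> defect n m f c} + card {f \<in> ?F. \<exists>c. defect n m f c}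
      \<le> eulerian n m + Suc n * m ^ n"
    using card_no_defect_le_eulerian[OF assms] card_defect_le by (rule add_mono)
  finally show ?thesis by (simp add: card_PiE)
qed

lemma choose_mult_eulerian_le_eulerian_r:
  assumes "1 \<le> r"
  shows "((k + r - 1) choose (r - 1)) * eulerian n (k + r - 1) \<le> eulerian_r r n k"
proof -
  let ?m = "k + r - 1"
  let ?P = "{w. w permutes {1..n} \<and> card (descents_outside n w {}) = ?m}"
  let ?Q = "\<lambda>w. {S. S \<subseteq> descents_outside n w {} \<and> card S = r - 1}"
  let ?E = "{(w, S). w permutes {1..n} \<and> S \<subseteq> {1..n-1} \<and> card S = r - 1
              \<and> card (descents_outside n w S) = k}"
  have finite_descents: "finite (descents_outside n w S)" for w S
    by (rule finite_subset[of _ "{1..n-1}"]) (auto simp: descents_outside_def)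
  have "(w, S) \<in> ?E" if w: "w \<in> ?P" and S: "S \<in> ?Q w" for w S
  proof -
    have "descents_outside n w S = descents_outside n w {} - S"
      by (auto simp: descents_outside_def)
    moreover have "finite S"
      using S finite_descents[of w "{}"] by (auto intro: finite_subset)
    ultimately have "card (descents_outside n w S) = ?m - (r - 1)"
      using w S by (simp add: card_Diff_subset)
    then show "(w, S) \<in> ?E"
      using w S assms by (auto simp: descents_outside_def)
  qed
  then have "Sigma ?P ?Q \<subseteq> ?E" by blast
  then have "card (Sigma ?P ?Q) \<le> eulerian_r r n k"
    unfolding eulerian_r_def
    by (rule card_mono[rotated])
       (rule finite_subset[of _ "{w. w permutes {1..n}} \<times> Pow {1..n-1}"],
        auto simp: finite_permutations)
  moreover have "card (Sigma ?P ?Q) = (\<Sum>w\<in>?P. card (?Q w))"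
    using finite_permutations[of "{1..n}"] finite_descents[of _ "{}"]
    by (intro card_SigmaI) (auto intro: finite_subset)
  moreover have "card (?Q w) = ?m choose (r - 1)" if "w \<in> ?P" for w
    using that n_subsets[OF finite_descents[of w "{}"]] by simp
  ultimately show ?thesis by (simp add: eulerian_def mult.commute)
qed

lemma exp_one_ge: "2.71 \<le> exp (1::real)"
proof -
  have "5837465777 / 2147483648 - inverse (2 ^ 32) \<le> exp (1::real)"
    using e_approx_32 by (simp only: abs_le_iff) linarith
  then show ?thesis by simp
qed

lemma exp_five_ge: "146 \<le> exp (5::real)"
proof -
  have "(146::real) \<le> 2.71 ^ 5" by (simp add: eval_nat_numeral)
  also have "\<dots> \<le> exp 1 ^ 5" using exp_one_ge by (rule power_mono) simp
  also have "\<dots> = exp 5" by (simp flip: exp_of_nat_mult)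
  finally show ?thesis .
qed

lemma ln_le_divide_add_ln:
  fixes x a :: real
  assumes "0 < x" "0 < a"
  shows "ln x \<le> x / a + ln a - 1"
  using ln_le_minus_one[of "x / a"] assms by (simp add: ln_div)

lemma five_mult_ln_le:
  fixes n r :: nat
  assumes "3 * r\<^sup>2 + 100 \<le> n" "1 \<le> r"
  shows "5 * real r * (ln (real n + 1) + 1) \<le> real n"
proof -
  define x y where "x = real n" and "y = real r"
  have y: "1 \<le> y" using assms(2) by (simp add: y_def)
  have "real (3 * r\<^sup>2 + 100) \<le> real n" using assms(1) by (simp only: of_nat_le_iff)
  then have x: "3 * y\<^sup>2 + 100 \<le> x" by (simp add: x_def y_def)
  \<comment> \<open>the tangent bound \<open>ln x \<le> x / a + ln a - 1\<close>, first with \<open>a = e^5\<close>, then with \<open>a = 20 r\<close>\<close>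
  have "ln (20 * y) \<le> 20 * y / exp 5 + 4"
    using ln_le_divide_add_ln[of "20 * y" "exp 5"] y by simp
  moreover have "20 * y / exp 5 \<le> 20 * y / 146"
    using exp_five_ge y by (intro divide_left_mono) auto
  moreover have "ln (x + 1) \<le> (x + 1) / (20 * y) + ln (20 * y) - 1"
    using ln_le_divide_add_ln[of "x + 1" "20 * y"] y by (simp add: x_def)
  ultimately have "ln (x + 1) + 1 \<le> (x + 1) / (20 * y) + 20 * y / 146 + 4"
    by linarith
  then have "5 * y * (ln (x + 1) + 1) \<le> 5 * y * ((x + 1) / (20 * y) + 20 * y / 146 + 4)"
    using y by (intro mult_left_mono) auto
  also have "\<dots> = x / 4 + 1 / 4 + (100 / 146) * y\<^sup>2 + 20 * y"
    using y by (simp add: field_simps power2_eq_square)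
  also have "\<dots> \<le> x"
  proof -
    have "0 \<le> (1565 / 1000) * (y - 64 / 10)\<^sup>2" by simp
    then have "0 \<le> (1565 / 1000) * y\<^sup>2 - (20032 / 1000) * y + 641024 / 10000"
      by (simp add: power2_eq_square algebra_simps)
    then show ?thesis using x y by linarith
  qed
  finally show ?thesis by (simp add: x_def y_def)
qed

lemma Suc_mult_pow_le_pow_Suc:
  fixes n m :: nat
  assumes "real (m + 1) * (ln (real n + 1) + 1) \<le> real n"
  shows "real (n + 1) * real m ^ n \<le> 0.4 * real (m + 1) ^ n"
proof (cases "m = 0")
  case True
  have "n \<noteq> 0"
  proof
    assume "n = 0"
    then show False using assms by simp
  qed
  then show ?thesis using True by (simp add: power_0_left)
next
  case False
  define q where "q = real m / real (m + 1)"
  have q: "0 < q" using False by (simp add: q_def)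
  have "real n * ln q \<le> real n * (q - 1)"
    using ln_le_minus_one[OF q] by (intro mult_left_mono) auto
  also have "\<dots> = - real n / real (m + 1)" by (simp add: q_def field_simps)
  also have "\<dots> \<le> - (ln (real n + 1) + 1)"
    using assms by (simp add: field_simps)
  finally have exponent: "real n * ln q \<le> - (ln (real n + 1) + 1)" .
  have "q ^ n = exp (real n * ln q)" using q by (simp add: exp_of_nat_mult)
  also have "\<dots> \<le> exp (- (ln (real n + 1) + 1))" using exponent by simp
  also have "\<dots> = exp (-1) / (real n + 1)"
    by (simp add: exp_diff exp_minus field_simps)
  also have "\<dots> \<le> 0.4 / (real n + 1)"
    using exp_one_ge by (intro divide_right_mono) (auto simp: exp_minus field_simps)
  finally have "real (n + 1) * q ^ n \<le> 0.4"
    by (simp add: field_simps)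
  then show ?thesis by (simp add: q_def power_divide field_simps)
qed


lemma add_mult_ln_le:
  fixes n r k :: nat
  assumes "(3 * r\<^sup>2 + 100 \<le> n \<and> 1 \<le> r \<and> k \<le> 4 * r)
    \<or> real k \<le> real n / (ln (real n + 1) + 1) - real r"
  shows "real (k + r) * (ln (real n + 1) + 1) \<le> real n"
proof -
  have pos: "0 < ln (real n + 1) + 1" using ln_ge_zero[of "real n + 1"] by linarith
  show ?thesis
    using assms
  proof (elim disjE)
    assume "3 * r\<^sup>2 + 100 \<le> n \<and> 1 \<le> r \<and> k \<le> 4 * r"
    then have "real (k + r) \<le> 5 * real r" "5 * real r * (ln (real n + 1) + 1) \<le> real n"
      using five_mult_ln_le[of r n] by auto
    with pos show ?thesis by (meson less_imp_le mult_right_mono order_trans)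
  qed (use pos in \<open>simp add: field_simps\<close>)
qed

theorem lemma2p8:
  fixes n r k :: nat
  assumes "n \<ge> 1" and "r \<ge> 1"
    and "(n \<ge> 3 * r^2 + 100 \<and> r \<ge> 2 \<and> k \<le> 4 * r)
         \<or> real k \<le> real n / (ln (real n + 1) + 1) - real r"
  shows "real (eulerian_r r n k) \<ge> 0.6 * real ((k + r - 1) choose (r - 1)) * real (k + r) ^ n"
proof -
  define m where "m = k + r - 1"
  have m: "m + 1 = k + r" using assms(2) by (simp add: m_def)
  have "real (m + 1) * (ln (real n + 1) + 1) \<le> real n"
    unfolding m using assms(3) by (intro add_mult_ln_le) auto
  then have "real (n + 1) * real m ^ n \<le> 0.4 * real (m + 1) ^ n"
    by (rule Suc_mult_pow_le_pow_Suc)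
  moreover have "real (m + 1) ^ n \<le> real (eulerian n m) + real (n + 1) * real m ^ n"
    using of_nat_mono[where 'a = real, OF Suc_pow_le_eulerian_add[OF assms(1), of m]]
    by (simp add: algebra_simps)
  ultimately have "0.6 * real (m + 1) ^ n \<le> real (eulerian n m)" by linarith
  then have eulerian_ge: "0.6 * real (k + r) ^ n \<le> real (eulerian n m)" by (simp only: m)
  have "0.6 * real ((k + r - 1) choose (r - 1)) * real (k + r) ^ n
      \<le> real ((k + r - 1) choose (r - 1)) * real (eulerian n m)"
    using mult_left_mono[OF eulerian_ge, of "real ((k + r - 1) choose (r - 1))"]
    by (simp add: mult_ac)
  also have "\<dots> \<le> real (eulerian_r r n k)"
    using of_nat_mono[where 'a = real, OF choose_mult_eulerian_le_eulerian_r[OF assms(2)]]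
    by (simp add: m_def)
  finally show ?thesis .
qed

end
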